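(* The height function of a shrub is determined by its fraction: if $P$ and $P'$ are shrubs on the same finite set $I$ with $f_P=f_{P'}$, then $h_P=h_{P'}$.
   Context: A shrub $P$ on a finite set $I$ is a set $E$ of edges (unordered pairs of distinct elements of $I$) with a height function $h_P:I\to\mathbb{N}$; $j$ covers $i$ if $\{i,j\}\in E$ and $h_P(j)=h_P(i)+1$. Axioms: (1) edges join vertices whose heights differ by $1$; (2) every vertex of positive height covers some vertex; (3) no four distinct $a,b,c,d$ with $a$ covering $b$ and $c$, $c$ covering $d$, $\{b,d\}\notin E$; (4) no five distinct $a,b,c,d,e$ with $a$ covering $c,d$, $b$ covering $d,e$, $\{a,e\}\notin E$, $\{b,c\}\notin E$. A vertex is ramified if it covers at least two distinct vertices; two ramified vertices are equivalent if they cover the same set of vertices; $\operatorname{Ram}(P)$ is the set of equivalence classes, and for $r\in\operatorname{Ram}(P)$, $r^-$ is the common set of vertices covered by elements of $r$. For $S\subseteq I$, $\langle S\rangle_P$ is the set of $j\in I$ such that every descending path from $j$ (each vertex covering the next) to a vertex of height $0$ meets $S$. $P\setminus\langle r\rangle_P$ is the restriction of $P$ to $I\setminus\langle r\rangle_P$. With $u[S]=\sum_{k\in S}u_k$, $$f_P=\frac{1}{\prod_{i\in I}u[\langle\{i\}\rangle_P]}\prod_{r\in\operatorname{Ram}(P)}\frac{u[\langle r^-\rangle_{P\setminus\langle r\rangle_P}]}{u[\langle r^-\rangle_P]}\in\mathbb{Q}(u_i:i\in I).$$ *)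

theory Defs
  imports Complex_Main
begin

definition covers :: "'a set set \<Rightarrow> ('a \<Rightarrow> nat) \<Rightarrow> 'a \<Rightarrow> 'a \<Rightarrow> bool" where
  "covers E h j i \<longleftrightarrow> {i, j} \<in> E \<and> h j = Suc (h i)"

definition is_shrub :: "'a set \<Rightarrow> 'a set set \<Rightarrow> ('a \<Rightarrow> nat) \<Rightarrow> bool" where
  "is_shrub I E h \<longleftrightarrow>
     finite I \<and>
     (\<forall>e\<in>E. \<exists>i j. e = {i, j} \<and> i \<noteq> j \<and> i \<in> I \<and> j \<in> I) \<and>
     \<comment> \<open>(1) edges join vertices whose heights differ by 1\<close>
     (\<forall>i j. {i, j} \<in> E \<longrightarrow> h i = Suc (h j) \<or> h j = Suc (h i)) \<and>
     \<comment> \<open>(2) every vertex of positive height covers some vertex\<close>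
     (\<forall>j\<in>I. 0 < h j \<longrightarrow> (\<exists>i. covers E h j i)) \<and>
     \<comment> \<open>(3)\<close>
     \<not> (\<exists>a b c d. distinct [a, b, c, d] \<and> covers E h a b \<and> covers E h a c \<and>
            covers E h c d \<and> {b, d} \<notin> E) \<and>
     \<comment> \<open>(4)\<close>
     \<not> (\<exists>a b c d e. distinct [a, b, c, d, e] \<and> covers E h a c \<and> covers E h a d \<and>
            covers E h b d \<and> covers E h b e \<and> {a, e} \<notin> E \<and> {b, c} \<notin> E)"

definition dpath :: "'a set set \<Rightarrow> ('a \<Rightarrow> nat) \<Rightarrow> 'a list \<Rightarrow> bool" where
  "dpath E h xs \<longleftrightarrow> xs \<noteq> [] \<and>
     (\<forall>m. Suc m < length xs \<longrightarrow> covers E h (xs ! m) (xs ! Suc m)) \<and> h (last xs) = 0"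

definition gen :: "'a set \<Rightarrow> 'a set set \<Rightarrow> ('a \<Rightarrow> nat) \<Rightarrow> 'a set \<Rightarrow> 'a set" where
  "gen I E h S = {j \<in> I. \<forall>xs. dpath E h xs \<and> hd xs = j \<longrightarrow> set xs \<inter> S \<noteq> {}}"

definition restr_edges :: "'a set set \<Rightarrow> 'a set \<Rightarrow> 'a set set" where
  "restr_edges E X = {e \<in> E. e \<inter> X = {}}"

definition ramified :: "'a set set \<Rightarrow> ('a \<Rightarrow> nat) \<Rightarrow> 'a \<Rightarrow> bool" where
  "ramified E h v \<longleftrightarrow> (\<exists>a b. a \<noteq> b \<and> covers E h v a \<and> covers E h v b)"

definition lower :: "'a set set \<Rightarrow> ('a \<Rightarrow> nat) \<Rightarrow> 'a \<Rightarrow> 'a set" where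
  "lower E h v = {i. covers E h v i}"

text \<open>Ram(P) is indexed by the sets r^- (which determine the class r).\<close>
definition Ram_lows :: "'a set \<Rightarrow> 'a set set \<Rightarrow> ('a \<Rightarrow> nat) \<Rightarrow> 'a set set" where
  "Ram_lows I E h = {lower E h v | v. v \<in> I \<and> ramified E h v}"

definition ram_class :: "'a set \<Rightarrow> 'a set set \<Rightarrow> ('a \<Rightarrow> nat) \<Rightarrow> 'a set \<Rightarrow> 'a set" where
  "ram_class I E h R = {v \<in> I. ramified E h v \<and> lower E h v = R}"

definition usum :: "('a \<Rightarrow> real) \<Rightarrow> 'a set \<Rightarrow> real" where
  "usum u S = (\<Sum>k\<in>S. u k)"

text \<open>The rational function f_P, represented by its values at positive real points u.\<close>
definition fP :: "'a set \<Rightarrow> 'a set set \<Rightarrow> ('a \<Rightarrow> nat) \<Rightarrow> ('a \<Rightarrow> real) \<Rightarrow> real" where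
  "fP I E h u =
     (1 / (\<Prod>i\<in>I. usum u (gen I E h {i}))) *
     (\<Prod>R\<in>Ram_lows I E h.
        (let X = gen I E h (ram_class I E h R) in
           usum u (gen (I - X) (restr_edges E X) h R) / usum u (gen I E h R)))"

end

theory Submission
  imports Defs
begin

text \<open>Fix j in I and evaluate f_P at the point u with u_j = t and u_k = 1 for k \<noteq> j. As t grows,
  u[S] is of order t if j is in S and of order 1 otherwise, so f_P(u) is of order t^(-d) with
  d = #{i. j in <i>} + #{r. j in <r^->} - #{r. j in <r^->_(P - <r>)}. Since
  <r^->_(P - <r>) = <r^-> - <r> and <r> is contained in <r^->, this is
  d = #{i. j in <i>} + #{r. j in <r>}. By axiom (3) every vertex below j at height m + 1 covers all
  vertices below j at height m. Hence each of the h(j) + 1 levels below j is either a single vertex i,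
  which happens exactly when j is in <i>, or has at least two vertices and then equals r^- for the
  ramified class r formed by the level above, which happens exactly when j is in <r>. So d = h(j) + 1,
  and the order of growth of f_P in u_j determines h(j).\<close>

section \<open>Order of growth at infinity\<close>

definition has_degree :: "(real \<Rightarrow> real) \<Rightarrow> int \<Rightarrow> bool" where
  "has_degree F d \<longleftrightarrow> (\<exists>c>0. ((\<lambda>t. F t / t powi d) \<longlongrightarrow> c) at_top)"

lemma has_degree_cong:
  assumes "eventually (\<lambda>t. F t = G t) at_top" and "has_degree F d"
  shows "has_degree G d"
proof -
  obtain c where "c > 0" and lim: "((\<lambda>t. F t / t powi d) \<longlongrightarrow> c) at_top"
    using assms(2) unfolding has_degree_def by blast
  have "eventually (\<lambda>t. F t / t powi d = G t / t powi d) at_top"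
    using assms(1) by eventually_elim simp
  with lim have "((\<lambda>t. G t / t powi d) \<longlongrightarrow> c) at_top" by (rule Lim_transform_eventually)
  with \<open>c > 0\<close> show ?thesis unfolding has_degree_def by blast
qed

lemma has_degree_const: "c > 0 \<Longrightarrow> has_degree (\<lambda>_. c) 0"
  unfolding has_degree_def by auto

lemma has_degree_id_plus_const: "has_degree (\<lambda>t. t + a) 1"
proof -
  have "((\<lambda>t::real. 1 + a * inverse t) \<longlongrightarrow> 1 + a * 0) at_top"
    by (intro tendsto_intros tendsto_inverse_0_at_top filterlim_ident)
  moreover have "eventually (\<lambda>t. 1 + a * inverse t = (t + a) / t powi 1) at_top"
    using eventually_gt_at_top[of 0] by eventually_elim (simp add: field_simps)
  ultimately have "((\<lambda>t. (t + a) / t powi 1) \<longlongrightarrow> 1) at_top"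
    by (simp add: Lim_transform_eventually)
  then show ?thesis unfolding has_degree_def by (intro exI[of _ 1]) simp
qed

lemma has_degree_mult:
  assumes "has_degree F d" and "has_degree G e"
  shows "has_degree (\<lambda>t. F t * G t) (d + e)"
proof -
  obtain c c' where "c > 0" "c' > 0" and lim: "((\<lambda>t. F t / t powi d) \<longlongrightarrow> c) at_top"
    "((\<lambda>t. G t / t powi e) \<longlongrightarrow> c') at_top"
    using assms unfolding has_degree_def by blast
  have "eventually (\<lambda>t. (F t / t powi d) * (G t / t powi e) = F t * G t / t powi (d + e)) at_top"
    using eventually_gt_at_top[of 0] by eventually_elim (simp add: power_int_add)
  with tendsto_mult[OF lim] have "((\<lambda>t. F t * G t / t powi (d + e)) \<longlongrightarrow> c * c') at_top"
    by (rule Lim_transform_eventually)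
  with \<open>c > 0\<close> \<open>c' > 0\<close> show ?thesis unfolding has_degree_def by (intro exI[of _ "c * c'"]) simp
qed

lemma has_degree_inverse:
  assumes "has_degree F d"
  shows "has_degree (\<lambda>t. inverse (F t)) (- d)"
proof -
  obtain c where "c > 0" and lim: "((\<lambda>t. F t / t powi d) \<longlongrightarrow> c) at_top"
    using assms unfolding has_degree_def by blast
  have "((\<lambda>t. inverse (F t / t powi d)) \<longlongrightarrow> inverse c) at_top"
    using tendsto_inverse[OF lim] \<open>c > 0\<close> by simp
  moreover have "inverse (F t / t powi d) = inverse (F t) / t powi (- d)" for t
    by (simp add: power_int_minus field_simps)
  ultimately show ?thesis using \<open>c > 0\<close> unfolding has_degree_def by (intro exI[of _ "inverse c"]) simp
qed

lemma has_degree_divide: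
  "has_degree F d \<Longrightarrow> has_degree G e \<Longrightarrow> has_degree (\<lambda>t. F t / G t) (d - e)"
  using has_degree_mult[OF _ has_degree_inverse] by (simp add: divide_inverse)

lemma has_degree_prod:
  assumes "finite A" and "\<And>x. x \<in> A \<Longrightarrow> has_degree (F x) (d x)"
  shows "has_degree (\<lambda>t. \<Prod>x\<in>A. F x t) (\<Sum>x\<in>A. d x)"
  using assms
proof (induction A rule: finite_induct)
  case empty
  then show ?case using has_degree_const[of 1] by simp
next
  case (insert x A)
  then show ?case using has_degree_mult[of "F x" "d x"] by simp
qed

lemma has_degree_unique:
  assumes "has_degree F d" and "has_degree G e" and "eventually (\<lambda>t. F t = G t) at_top"
  shows "d = e"
proof (rule ccontr)
  assume "d \<noteq> e"
  have no_gap: False if F: "has_degree F a" and G: "has_degree F b" and "a < b" for F a b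
  proof -
    obtain c c' where "c > 0" "c' > 0" and lim: "((\<lambda>t. F t / t powi a) \<longlongrightarrow> c) at_top"
      "((\<lambda>t. F t / t powi b) \<longlongrightarrow> c') at_top"
      using F G unfolding has_degree_def by blast
    have ratio: "((\<lambda>t. (F t / t powi a) / (F t / t powi b)) \<longlongrightarrow> c / c') at_top"
      using tendsto_divide[OF lim] \<open>c' > 0\<close> by simp
    have "eventually (\<lambda>t. F t / t powi b > 0 \<and> t > 0) at_top"
      using order_tendstoD(1)[OF lim(2) \<open>c' > 0\<close>] eventually_gt_at_top[of 0] by (rule eventually_conj)
    then have "eventually (\<lambda>t. (F t / t powi a) / (F t / t powi b) = t ^ nat (b - a)) at_top"
    proof eventually_elim
      case (elim t)
      then have "F t \<noteq> 0" by auto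
      with elim \<open>a < b\<close> show ?case
        by (simp add: power_int_diff flip: power_int_of_nat)
    qed
    with ratio have "((\<lambda>t. t ^ nat (b - a)) \<longlongrightarrow> c / c') at_top"
      by (rule Lim_transform_eventually)
    moreover have "filterlim (\<lambda>t::real. t ^ nat (b - a)) at_top at_top"
      using filterlim_pow_at_top[OF _ filterlim_ident] \<open>a < b\<close> by simp
    ultimately show False
      using not_tendsto_and_filterlim_at_infinity[of at_top] filterlim_at_top_imp_at_infinity
      by fastforce
  qed
  have "has_degree F e" using has_degree_cong[OF _ assms(2)] assms(3) by (simp add: eq_commute)
  with assms(1) \<open>d \<noteq> e\<close> show False using no_gap by (metis linorder_neqE)
qed

lemma two_le_card_iff: "finite A \<Longrightarrow> 2 \<le> card A \<longleftrightarrow> (\<exists>a\<in>A. \<exists>b\<in>A. a \<noteq> b)"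
proof
  assume "finite A" "2 \<le> card A"
  then obtain a B where "A = insert a B" "a \<notin> B" "1 \<le> card B"
    using card_le_Suc_iff[of 1 A] by auto
  then obtain b where "b \<in> B" by fastforce
  then have "a \<in> A" "b \<in> A" "a \<noteq> b" using \<open>A = insert a B\<close> \<open>a \<notin> B\<close> by auto
  then show "\<exists>a\<in>A. \<exists>b\<in>A. a \<noteq> b" by blast
next
  assume "finite A" and "\<exists>a\<in>A. \<exists>b\<in>A. a \<noteq> b"
  then obtain a b where "a \<in> A" "b \<in> A" "a \<noteq> b" by blast
  then have "card {a, b} \<le> card A" using card_mono[OF \<open>finite A\<close>, of "{a, b}"] by simp
  with \<open>a \<noteq> b\<close> show "2 \<le> card A" by simp
qed

section \<open>Descending paths\<close>

lemma shrub_edge: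
  assumes "is_shrub I E h" and "{a, b} \<in> E"
  shows "a \<in> I" and "b \<in> I"
proof -
  have "\<forall>e\<in>E. \<exists>i j. e = {i, j} \<and> i \<noteq> j \<and> i \<in> I \<and> j \<in> I"
    using assms(1) unfolding is_shrub_def by (elim conjE)
  then obtain i j where ij: "{a, b} = {i, j}" "i \<in> I" "j \<in> I"
    using assms(2) by blast
  then have "a \<in> {i, j}" "b \<in> {i, j}" by (metis insertI1, metis insertI1 insertI2)
  with ij show "a \<in> I" "b \<in> I" by blast+
qed

lemma shrub_finite: "is_shrub I E h \<Longrightarrow> finite I"
  unfolding is_shrub_def by (elim conjE)

lemma covers_height: "covers E h x y \<Longrightarrow> h x = Suc (h y)"
  by (simp add: covers_def)

lemma covers_in_carrier:
  assumes "is_shrub I E h" and "covers E h x y"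
  shows "x \<in> I" and "y \<in> I"
  using shrub_edge[OF assms(1)] assms(2) unfolding covers_def by blast+

lemma shrub_covers_exists: "is_shrub I E h \<Longrightarrow> j \<in> I \<Longrightarrow> 0 < h j \<Longrightarrow> \<exists>i. covers E h j i"
  unfolding is_shrub_def by blast

lemma shrub_covers_sibling_lower:
  assumes "is_shrub I E h" and "covers E h z x" "covers E h z x'" "covers E h x' y" and "x \<noteq> x'"
  shows "covers E h x y"
proof -
  have heights: "h z = Suc (h x)" "h z = Suc (h x')" "h x' = Suc (h y)"
    using covers_height[OF assms(2)] covers_height[OF assms(3)] covers_height[OF assms(4)] by simp_all
  have "\<not> (\<exists>a b c d. distinct [a, b, c, d] \<and> covers E h a b \<and> covers E h a c \<and>
            covers E h c d \<and> {b, d} \<notin> E)"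
    using assms(1) unfolding is_shrub_def by (elim conjE)
  moreover have "distinct [z, x, x', y]" using heights \<open>x \<noteq> x'\<close> by auto
  ultimately have "{x, y} \<in> E" using assms(2-4) by blast
  then show ?thesis using heights unfolding covers_def by (simp add: insert_commute)
qed

lemma below_height:
  assumes "(covers E h)\<^sup>*\<^sup>* x y"
  shows "h y \<le> h x" and "y \<noteq> x \<Longrightarrow> h y < h x"
  using assms by (induction rule: rtranclp_induct) (auto simp: covers_def)

lemma below_in_carrier: "(covers E h)\<^sup>*\<^sup>* x y \<Longrightarrow> is_shrub I E h \<Longrightarrow> x \<in> I \<Longrightarrow> y \<in> I"
  by (induction rule: rtranclp_induct) (auto dest: covers_in_carrier)

lemma dpath_Cons: "dpath E h ys \<Longrightarrow> covers E h x (hd ys) \<Longrightarrow> dpath E h (x # ys)"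
  unfolding dpath_def by (auto simp: nth_Cons hd_conv_nth split: nat.split)

lemma dpath_exists:
  assumes "is_shrub I E h" and "x \<in> I"
  shows "\<exists>xs. dpath E h xs \<and> hd xs = x"
  using assms(2)
proof (induction "h x" arbitrary: x)
  case 0
  then show ?case by (intro exI[of _ "[x]"]) (simp add: dpath_def)
next
  case (Suc n)
  obtain z where z: "covers E h x z" using shrub_covers_exists[OF assms(1) Suc.prems] Suc.hyps by auto
  have "h z = n" using covers_height[OF z] Suc.hyps(2) by simp
  moreover have "z \<in> I" using covers_in_carrier(2)[OF assms(1) z] .
  ultimately obtain ys where "dpath E h ys" "hd ys = z" using Suc.hyps(1) by blast
  with z have "dpath E h (x # ys)" by (simp add: dpath_Cons)
  then show ?case by (intro exI[of _ "x # ys"]) simp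
qed

lemma dpath_height_nth: "dpath E h xs \<Longrightarrow> m < length xs \<Longrightarrow> h (xs ! m) + m = h (hd xs)"
proof (induction m)
  case 0
  then show ?case by (simp add: hd_conv_nth)
next
  case (Suc m)
  then have "covers E h (xs ! m) (xs ! Suc m)" unfolding dpath_def by blast
  with Suc show ?case by (simp add: covers_height)
qed

lemma dpath_below_hd: "dpath E h xs \<Longrightarrow> x \<in> set xs \<Longrightarrow> (covers E h)\<^sup>*\<^sup>* (hd xs) x"
proof -
  have "(covers E h)\<^sup>*\<^sup>* (hd xs) (xs ! m)" if "dpath E h xs" "m < length xs" for m
    using that
  proof (induction m)
    case 0
    then show ?case by (simp add: hd_conv_nth)
  next
    case (Suc m)
    then show ?case unfolding dpath_def by (auto intro: rtranclp.rtrancl_into_rtrancl)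
  qed
  then show "dpath E h xs \<Longrightarrow> x \<in> set xs \<Longrightarrow> ?thesis" by (metis in_set_conv_nth)
qed

lemma dpath_meets_height:
  assumes "dpath E h xs" and "k \<le> h (hd xs)"
  shows "\<exists>x\<in>set xs. h x = k"
proof -
  have "xs \<noteq> []" and "h (xs ! (length xs - 1)) = 0"
    using assms(1) unfolding dpath_def by (auto simp: last_conv_nth)
  then have "h (hd xs) = length xs - 1" using dpath_height_nth[OF assms(1), of "length xs - 1"] by simp
  then have p: "h (hd xs) - k < length xs" using \<open>xs \<noteq> []\<close> by simp
  then have "h (xs ! (h (hd xs) - k)) = k" using dpath_height_nth[OF assms(1)] assms(2) by fastforce
  with nth_mem[OF p] show ?thesis by blast
qed

lemma dpath_height_inj: "dpath E h xs \<Longrightarrow> inj_on h (set xs)"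
proof (rule inj_onI)
  fix x y assume xs: "dpath E h xs" and "x \<in> set xs" "y \<in> set xs" "h x = h y"
  obtain p q where "p < length xs" "x = xs ! p" "q < length xs" "y = xs ! q"
    using \<open>x \<in> set xs\<close> \<open>y \<in> set xs\<close> by (auto simp: in_set_conv_nth)
  moreover have "p = q"
    using dpath_height_nth[OF xs, of p] dpath_height_nth[OF xs, of q] \<open>h x = h y\<close> calculation by simp
  ultimately show "x = y" by simp
qed

lemma dpath_successor:
  assumes "dpath E h xs" and "w \<in> set xs" and "0 < h w"
  shows "\<exists>y\<in>set xs. covers E h w y"
proof -
  obtain p where p: "p < length xs" "w = xs ! p" using assms(2) by (metis in_set_conv_nth)
  have "Suc p < length xs"
  proof (rule ccontr)
    assume "\<not> Suc p < length xs"
    then have "p = length xs - 1" using p by simp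
    moreover have "xs \<noteq> []" using p by auto
    ultimately have "w = last xs" using p by (simp add: last_conv_nth)
    then show False using assms(1,3) unfolding dpath_def by simp
  qed
  with assms(1) p show ?thesis unfolding dpath_def by (metis nth_mem)
qed

lemma dpath_drop: "dpath E h xs \<Longrightarrow> p < length xs \<Longrightarrow> dpath E h (drop p xs)"
  unfolding dpath_def by simp

lemma dpath_through:
  assumes "is_shrub I E h" and "(covers E h)\<^sup>*\<^sup>* x y" and "x \<in> I"
  shows "\<exists>xs. dpath E h xs \<and> hd xs = x \<and> y \<in> set xs"
proof -
  have "y \<in> I" using below_in_carrier[OF assms(2,1,3)] .
  from assms(2) show ?thesis
  proof (induction rule: converse_rtranclp_induct)
    case base
    from dpath_exists[OF assms(1) \<open>y \<in> I\<close>] obtain ys where "dpath E h ys" "hd ys = y" by blast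
    moreover from \<open>dpath E h ys\<close> have "hd ys \<in> set ys" unfolding dpath_def by simp
    ultimately show ?case by blast
  next
    case (step x z)
    then obtain xs where "dpath E h xs" "hd xs = z" "y \<in> set xs" by blast
    with step.hyps(1) show ?case by (intro exI[of _ "x # xs"]) (simp add: dpath_Cons)
  qed
qed

section \<open>Levels below a vertex\<close>

definition level :: "'a set set \<Rightarrow> ('a \<Rightarrow> nat) \<Rightarrow> 'a \<Rightarrow> nat \<Rightarrow> 'a set" where
  "level E h j k = {x. (covers E h)\<^sup>*\<^sup>* j x \<and> h x = k}"

lemma level_subset:
  assumes "is_shrub I E h" and "j \<in> I"
  shows "level E h j k \<subseteq> I"
  using below_in_carrier[OF _ assms] unfolding level_def by blast

lemma finite_level: "is_shrub I E h \<Longrightarrow> j \<in> I \<Longrightarrow> finite (level E h j k)"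
  using finite_subset[OF level_subset shrub_finite] .

lemma dpath_meets_level:
  assumes "dpath E h xs" and "k \<le> h (hd xs)"
  shows "\<exists>x\<in>set xs. x \<in> level E h (hd xs) k"
  using dpath_meets_height[OF assms] dpath_below_hd[OF assms(1)] unfolding level_def by blast

lemma level_nonempty:
  assumes "is_shrub I E h" and "j \<in> I" and "k \<le> h j"
  shows "level E h j k \<noteq> {}"
proof -
  obtain xs where "dpath E h xs" "hd xs = j" using dpath_exists[OF assms(1,2)] by blast
  with dpath_meets_level[of E h xs k] assms(3) show ?thesis by auto
qed

lemma level_top: "level E h j (h j) = {j}"
proof -
  have "x = j" if "(covers E h)\<^sup>*\<^sup>* j x" "h x = h j" for x
  proof (rule ccontr)
    assume "x \<noteq> j"
    then show False using below_height(2)[OF that(1)] that(2) by simp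
  qed
  then show ?thesis unfolding level_def by auto
qed

lemma covers_level:
  assumes "x \<in> level E h j (Suc k)" and "covers E h x y"
  shows "y \<in> level E h j k"
proof -
  have "(covers E h)\<^sup>*\<^sup>* j x" "h x = Suc k" using assms(1) unfolding level_def by simp_all
  then have "(covers E h)\<^sup>*\<^sup>* j y" "h y = k"
    using rtranclp.rtrancl_into_rtrancl[of "covers E h" j x y, OF _ assms(2)] covers_height[OF assms(2)] by simp_all
  then show ?thesis unfolding level_def by simp
qed

lemma level_covered:
  assumes "y \<in> level E h j k" and "k < h j"
  shows "\<exists>x\<in>level E h j (Suc k). covers E h x y"
proof -
  have below: "(covers E h)\<^sup>*\<^sup>* j y" and "h y = k" using assms(1) unfolding level_def by auto
  then have "y \<noteq> j" using assms(2) by auto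
  obtain x where "(covers E h)\<^sup>*\<^sup>* j x" "covers E h x y"
    using below by (rule rtranclp.cases) (use \<open>y \<noteq> j\<close> in simp_all)
  with \<open>h y = k\<close> show ?thesis unfolding level_def by (auto simp: covers_height)
qed

text \<open>Downward induction from the top level, which is just j; in the step, axiom (3) transfers the
  covered vertices from a sibling x' to x through a common cover z one level up.\<close>
lemma lower_eq_level:
  assumes "is_shrub I E h" and "j \<in> I"
  shows "k < h j \<Longrightarrow> x \<in> level E h j (Suc k) \<Longrightarrow> lower E h x = level E h j k"
proof (induction "h j - k" arbitrary: k x rule: less_induct)
  case less
  show ?case
  proof
    show "lower E h x \<subseteq> level E h j k"
      using covers_level[OF less.prems(2)] unfolding lower_def by blast
    show "level E h j k \<subseteq> lower E h x"
    proof
      fix y assume y: "y \<in> level E h j k"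
      obtain x' where x': "x' \<in> level E h j (Suc k)" "covers E h x' y"
        using level_covered[OF y less.prems(1)] by blast
      show "y \<in> lower E h x"
      proof (cases "x' = x")
        case True
        with x' show ?thesis unfolding lower_def by simp
      next
        case False
        have "Suc k \<noteq> h j"
        proof
          assume "Suc k = h j"
          then have "x \<in> {j}" "x' \<in> {j}" using x'(1) less.prems(2) level_top[of E h j] by simp_all
          with False show False by simp
        qed
        then have "Suc k < h j" using less.prems(1) by simp
        then obtain z where z: "z \<in> level E h j (Suc (Suc k))"
          using level_nonempty[OF assms, of "Suc (Suc k)"] by auto
        have "h j - Suc k < h j - k" using less.prems(1) by simp
        then have "lower E h z = level E h j (Suc k)"
          using less.hyps[OF _ \<open>Suc k < h j\<close> z] by simp
        then have "x \<in> lower E h z" "x' \<in> lower E h z" using less.prems(2) x'(1) by simp_all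
        then have "covers E h z x" "covers E h z x'" unfolding lower_def by simp_all
        then have "covers E h x y"
          using shrub_covers_sibling_lower[OF assms(1) _ _ x'(2) False[symmetric]] by simp
        then show ?thesis unfolding lower_def by simp
      qed
    qed
  qed
qed

lemma genI:
  "j \<in> I \<Longrightarrow> (\<And>xs. dpath E h xs \<Longrightarrow> hd xs = j \<Longrightarrow> set xs \<inter> S \<noteq> {}) \<Longrightarrow> j \<in> gen I E h S"
  unfolding gen_def by blast

lemma genD: "hd xs \<in> gen I E h S \<Longrightarrow> dpath E h xs \<Longrightarrow> \<exists>x\<in>set xs. x \<in> S"
  unfolding gen_def by blast

lemma gen_subset: "gen I E h S \<subseteq> I"
  unfolding gen_def by blast

lemma gen_self:
  assumes "x \<in> I" and "x \<in> S"
  shows "x \<in> gen I E h S"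
proof (rule genI[OF assms(1)])
  fix xs assume "dpath E h xs" "hd xs = x"
  then have "x \<in> set xs" using hd_in_set[of xs] unfolding dpath_def by simp
  with assms(2) show "set xs \<inter> S \<noteq> {}" by blast
qed

lemma gen_below:
  assumes "is_shrub I E h" and "j \<in> gen I E h S"
  shows "\<exists>x\<in>S. (covers E h)\<^sup>*\<^sup>* j x"
proof -
  have "j \<in> I" using subsetD[OF gen_subset assms(2)] .
  then obtain xs where xs: "dpath E h xs" "hd xs = j" using dpath_exists[OF assms(1)] by blast
  then have "hd xs \<in> gen I E h S" using assms(2) by simp
  then obtain x where x: "x \<in> set xs" "x \<in> S" using genD[OF _ xs(1)] by blast
  have "(covers E h)\<^sup>*\<^sup>* j x" using dpath_below_hd[OF xs(1) x(1)] xs(2) by simp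
  with x(2) show ?thesis by blast
qed

lemma gen_iff_level_subset:
  assumes "is_shrub I E h" and "j \<in> I" and "\<forall>x\<in>S. h x = m" and "m \<le> h j"
  shows "j \<in> gen I E h S \<longleftrightarrow> level E h j m \<subseteq> S"
proof
  assume gen: "j \<in> gen I E h S"
  show "level E h j m \<subseteq> S"
  proof
    fix x assume x: "x \<in> level E h j m"
    then have "(covers E h)\<^sup>*\<^sup>* j x" unfolding level_def by simp
    then obtain xs where xs: "dpath E h xs" "hd xs = j" "x \<in> set xs"
      using dpath_through[OF assms(1) _ assms(2)] by blast
    moreover have "hd xs \<in> gen I E h S" using xs(2) gen by simp
    ultimately obtain w where w: "w \<in> set xs" "w \<in> S" using genD by blast
    have "h w = h x" using w(2) x assms(3) unfolding level_def by simp
    then have "w = x" using inj_onD[OF dpath_height_inj[OF xs(1)]] w(1) xs(3) by simp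
    with w(2) show "x \<in> S" by simp
  qed
next
  assume sub: "level E h j m \<subseteq> S"
  show "j \<in> gen I E h S"
  proof (rule genI[OF assms(2)])
    fix xs assume xs: "dpath E h xs" "hd xs = j"
    then obtain x where "x \<in> set xs" "x \<in> level E h j m"
      using dpath_meets_level[OF xs(1), of m] assms(4) by auto
    with sub show "set xs \<inter> S \<noteq> {}" by blast
  qed
qed

lemma gen_singleton_iff:
  assumes "is_shrub I E h" and "j \<in> I" and "i \<in> I"
  shows "j \<in> gen I E h {i} \<longleftrightarrow> h i \<le> h j \<and> level E h j (h i) = {i}"
proof
  assume gen: "j \<in> gen I E h {i}"
  then have "(covers E h)\<^sup>*\<^sup>* j i" using gen_below[OF assms(1) gen] by simp
  then have le: "h i \<le> h j" and i: "i \<in> level E h j (h i)"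
    using below_height(1) unfolding level_def by simp_all
  have "level E h j (h i) \<subseteq> {i}"
    using gen gen_iff_level_subset[OF assms(1,2), of "{i}" "h i"] le by simp
  with le i show "h i \<le> h j \<and> level E h j (h i) = {i}" by blast
next
  assume "h i \<le> h j \<and> level E h j (h i) = {i}"
  then show "j \<in> gen I E h {i}"
    using gen_iff_level_subset[OF assms(1,2), of "{i}" "h i"] by simp
qed

section \<open>Ramified classes\<close>

lemma lower_subset:
  assumes "is_shrub I E h"
  shows "lower E h v \<subseteq> I"
proof
  fix i assume "i \<in> lower E h v"
  then show "i \<in> I" using covers_in_carrier(2)[OF assms] unfolding lower_def by simp
qed

lemma ramified_iff_card:
  assumes "is_shrub I E h"
  shows "ramified E h v \<longleftrightarrow> 2 \<le> card (lower E h v)"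
proof -
  have "finite (lower E h v)" using finite_subset[OF lower_subset[OF assms] shrub_finite[OF assms]] .
  moreover have "ramified E h v \<longleftrightarrow> (\<exists>a\<in>lower E h v. \<exists>b\<in>lower E h v. a \<noteq> b)"
    unfolding ramified_def lower_def by blast
  ultimately show ?thesis using two_le_card_iff by blast
qed

lemma ram_class_height:
  assumes "x \<in> R" and "w \<in> ram_class I E h R"
  shows "h w = Suc (h x)"
proof -
  have "x \<in> lower E h w" using assms unfolding ram_class_def by simp
  then show ?thesis unfolding lower_def by (simp add: covers_height)
qed

lemma Ram_lowsE:
  assumes "R \<in> Ram_lows I E h"
  obtains v a b where "v \<in> I" "R = lower E h v" "a \<in> R" "b \<in> R" "a \<noteq> b"
proof -
  obtain v where v: "v \<in> I" "ramified E h v" "R = lower E h v"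
    using assms unfolding Ram_lows_def by blast
  then obtain a b where "a \<noteq> b" "covers E h v a" "covers E h v b" unfolding ramified_def by blast
  with v show thesis using that[of v a b] unfolding lower_def by simp
qed

lemma gen_ram_class_imp_level:
  assumes S: "is_shrub I E h" and j: "j \<in> I"
    and R: "R \<in> Ram_lows I E h" and gen: "j \<in> gen I E h (ram_class I E h R)"
  shows "\<exists>k<h j. R = level E h j k \<and> 2 \<le> card R"
proof -
  obtain v a b where v: "v \<in> I" "R = lower E h v" and ab: "a \<in> R" "b \<in> R" "a \<noteq> b"
    using R by (rule Ram_lowsE)
  have height: "\<forall>w\<in>ram_class I E h R. h w = Suc (h a)"
    using ram_class_height[OF ab(1)] by blast
  obtain w where w: "w \<in> ram_class I E h R" "(covers E h)\<^sup>*\<^sup>* j w"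
    using gen_below[OF S gen] by blast
  have k: "h a < h j" using below_height(1)[OF w(2)] height w(1) by simp
  then obtain x where x: "x \<in> level E h j (Suc (h a))"
    using level_nonempty[OF S j, of "Suc (h a)"] by auto
  have "level E h j (Suc (h a)) \<subseteq> ram_class I E h R"
    using gen_iff_level_subset[OF S j height] gen k by simp
  with x have "lower E h x = R" unfolding ram_class_def by blast
  moreover have "lower E h x = level E h j (h a)" using lower_eq_level[OF S j k x] .
  moreover have "2 \<le> card R"
  proof -
    have "R \<subseteq> I" using lower_subset[OF S] v(2) by simp
    then have "finite R" using finite_subset shrub_finite[OF S] by blast
    with ab show ?thesis using two_le_card_iff by blast
  qed
  ultimately show ?thesis using k by auto
qed

lemma level_imp_gen_ram_class:
  assumes S: "is_shrub I E h" and j: "j \<in> I"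
    and k: "k < h j" and card: "2 \<le> card (level E h j k)"
  shows "level E h j k \<in> Ram_lows I E h \<and> j \<in> gen I E h (ram_class I E h (level E h j k))"
proof -
  have sub: "level E h j (Suc k) \<subseteq> ram_class I E h (level E h j k)"
  proof
    fix x assume x: "x \<in> level E h j (Suc k)"
    have lower: "lower E h x = level E h j k" using lower_eq_level[OF S j k x] .
    moreover have "x \<in> I" using level_subset[OF S j] x by blast
    moreover have "ramified E h x" using ramified_iff_card[OF S] lower card by simp
    ultimately show "x \<in> ram_class I E h (level E h j k)" unfolding ram_class_def by simp
  qed
  obtain x where "x \<in> level E h j (Suc k)" using level_nonempty[OF S j, of "Suc k"] k by auto
  with sub have "level E h j k \<in> Ram_lows I E h" unfolding ram_class_def Ram_lows_def by blast
  moreover obtain y where y: "y \<in> level E h j k" using level_nonempty[OF S j, of k] k by auto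
  have "h y = k" using y unfolding level_def by simp
  have heights: "\<forall>w\<in>ram_class I E h (level E h j k). h w = Suc k"
  proof
    fix w assume "w \<in> ram_class I E h (level E h j k)"
    with ram_class_height[OF y this] \<open>h y = k\<close> show "h w = Suc k" by simp
  qed
  then have "j \<in> gen I E h (ram_class I E h (level E h j k))"
    using gen_iff_level_subset[OF S j heights] sub k by simp
  ultimately show ?thesis by blast
qed

lemma inj_on_level:
  assumes "is_shrub I E h" and "j \<in> I"
  shows "inj_on (level E h j) {..h j}"
proof (rule inj_onI)
  fix k k' assume "k \<in> {..h j}" and eq: "level E h j k = level E h j k'"
  then obtain x where x: "x \<in> level E h j k" using level_nonempty[OF assms, of k] by auto
  then have "x \<in> level E h j k'" using eq by simp
  with x show "k = k'" unfolding level_def by simp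
qed

lemma card_gen_singletons:
  assumes S: "is_shrub I E h" and j: "j \<in> I"
  shows "card {i \<in> I. j \<in> gen I E h {i}} = card {k. k \<le> h j \<and> card (level E h j k) = 1}"
proof (rule bij_betw_same_card[of h], rule bij_betw_imageI)
  have iff: "i \<in> {i \<in> I. j \<in> gen I E h {i}} \<longleftrightarrow> i \<in> I \<and> h i \<le> h j \<and> level E h j (h i) = {i}"
    for i using gen_singleton_iff[OF S j, of i] by auto
  show "inj_on h {i \<in> I. j \<in> gen I E h {i}}"
  proof (rule inj_onI)
    fix x y assume "x \<in> {i \<in> I. j \<in> gen I E h {i}}" "y \<in> {i \<in> I. j \<in> gen I E h {i}}" "h x = h y"
    then have "{x} = {y}" using iff by metis
    then show "x = y" by simp
  qed
  show "h ` {i \<in> I. j \<in> gen I E h {i}} = {k. k \<le> h j \<and> card (level E h j k) = 1}"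
  proof (intro equalityI subsetI)
    fix k assume "k \<in> h ` {i \<in> I. j \<in> gen I E h {i}}"
    then obtain i where "k = h i" "i \<in> I" "h i \<le> h j" "level E h j (h i) = {i}" using iff by blast
    then show "k \<in> {k. k \<le> h j \<and> card (level E h j k) = 1}" by simp
  next
    fix k assume "k \<in> {k. k \<le> h j \<and> card (level E h j k) = 1}"
    then obtain i where k: "k \<le> h j" "level E h j k = {i}" by (auto simp: card_1_singleton_iff)
    then have "i \<in> level E h j k" by simp
    then have "i \<in> I" "h i = k" using level_subset[OF S j] unfolding level_def by auto
    with k iff show "k \<in> h ` {i \<in> I. j \<in> gen I E h {i}}" by auto
  qed
qed

lemma card_gen_singletons_ram_classes:
  assumes S: "is_shrub I E h" and j: "j \<in> I"
  shows "card {i \<in> I. j \<in> gen I E h {i}} + card {R \<in> Ram_lows I E h. j \<in> gen I E h (ram_class I E h R)}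
    = Suc (h j)"
proof -
  define K1 where "K1 = {k. k \<le> h j \<and> card (level E h j k) = 1}"
  define K2 where "K2 = {k. k < h j \<and> 2 \<le> card (level E h j k)}"
  have "{R \<in> Ram_lows I E h. j \<in> gen I E h (ram_class I E h R)} = level E h j ` K2"
  proof (intro equalityI subsetI)
    fix R assume "R \<in> {R \<in> Ram_lows I E h. j \<in> gen I E h (ram_class I E h R)}"
    then obtain k where "k < h j" "R = level E h j k" "2 \<le> card R"
      using gen_ram_class_imp_level[OF S j] by blast
    then show "R \<in> level E h j ` K2" unfolding K2_def by simp
  next
    fix R assume "R \<in> level E h j ` K2"
    then obtain k where "k < h j" "2 \<le> card (level E h j k)" "R = level E h j k"
      unfolding K2_def by blast
    then show "R \<in> {R \<in> Ram_lows I E h. j \<in> gen I E h (ram_class I E h R)}"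
      using level_imp_gen_ram_class[OF S j] by simp
  qed
  moreover have "inj_on (level E h j) K2"
    by (rule inj_on_subset[OF inj_on_level[OF S j]]) (auto simp: K2_def)
  ultimately have card2: "card {R \<in> Ram_lows I E h. j \<in> gen I E h (ram_class I E h R)} = card K2"
    by (simp add: card_image)
  have "K1 \<union> K2 = {..h j}"
  proof -
    have "card (level E h j k) \<noteq> 0" if "k \<le> h j" for k
      using level_nonempty[OF S j that] finite_level[OF S j] by simp
    moreover have "card (level E h j (h j)) = 1" by (simp add: level_top)
    ultimately show ?thesis unfolding K1_def K2_def by (fastforce simp: le_less)
  qed
  moreover have "K1 \<inter> K2 = {}" unfolding K1_def K2_def by auto
  moreover have "finite K1" "finite K2" unfolding K1_def K2_def by simp_all
  ultimately have "card K1 + card K2 = Suc (h j)" using card_Un_disjoint[of K1 K2] by simp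
  with card_gen_singletons[OF S j] card2 show ?thesis unfolding K1_def by simp
qed

section \<open>Removing the span of a ramified class\<close>

lemma dpath_restr_edges: "dpath (restr_edges E X) h xs \<Longrightarrow> dpath E h xs"
  unfolding dpath_def covers_def restr_edges_def by simp

lemma dpath_restr_edgesI:
  assumes "dpath E h xs" and "set xs \<inter> X = {}"
  shows "dpath (restr_edges E X) h xs"
  unfolding dpath_def
proof (intro conjI allI impI)
  show "xs \<noteq> []" "h (last xs) = 0" using assms(1) unfolding dpath_def by simp_all
  fix m assume m: "Suc m < length xs"
  then have "covers E h (xs ! m) (xs ! Suc m)" using assms(1) unfolding dpath_def by simp
  moreover have "xs ! m \<in> set xs" "xs ! Suc m \<in> set xs" using m by simp_all
  then have "xs ! m \<notin> X" "xs ! Suc m \<notin> X" using assms(2) by blast+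
  ultimately show "covers (restr_edges E X) h (xs ! m) (xs ! Suc m)"
    unfolding covers_def restr_edges_def by simp
qed

lemma gen_restr_edges:
  fixes I :: "'a set" and E :: "'a set set" and h :: "'a \<Rightarrow> nat" and C R :: "'a set"
  assumes through: "\<And>xs w. dpath E h xs \<Longrightarrow> w \<in> set xs \<Longrightarrow> w \<in> C \<Longrightarrow> set xs \<inter> R \<noteq> {}"
  defines "X \<equiv> gen I E h C"
  shows "gen (I - X) (restr_edges E X) h R = gen I E h R - X"
proof (intro equalityI subsetI)
  fix j assume j: "j \<in> gen (I - X) (restr_edges E X) h R"
  then have "j \<in> I - X" by (rule subsetD[OF gen_subset])
  then have "j \<in> I" "j \<notin> X" by simp_all
  have "set xs \<inter> R \<noteq> {}" if xs: "dpath E h xs" "hd xs = j" for xs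
  proof (cases "set xs \<inter> X = {}")
    case True
    have "hd xs \<in> gen (I - X) (restr_edges E X) h R" using j xs(2) by simp
    from genD[OF this dpath_restr_edgesI[OF xs(1) True]] show ?thesis by blast
  next
    case False
    then obtain p where p: "p < length xs" "xs ! p \<in> X" by (auto simp: in_set_conv_nth)
    then have "hd (drop p xs) \<in> gen I E h C" unfolding X_def by (simp add: hd_drop_conv_nth)
    from genD[OF this dpath_drop[OF xs(1) p(1)]]
    obtain w where "w \<in> set (drop p xs)" "w \<in> C" by blast
    with through[OF xs(1) in_set_dropD] show ?thesis by blast
  qed
  then have "j \<in> gen I E h R" by (rule genI[OF \<open>j \<in> I\<close>])
  with \<open>j \<notin> X\<close> show "j \<in> gen I E h R - X" by simp
next
  fix j assume j: "j \<in> gen I E h R - X"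
  then have "j \<in> gen I E h R" by simp
  then have "j \<in> I" by (rule subsetD[OF gen_subset])
  with j have "j \<in> I - X" by simp
  moreover have "set xs \<inter> R \<noteq> {}" if xs: "dpath (restr_edges E X) h xs" "hd xs = j" for xs
  proof -
    have "hd xs \<in> gen I E h R" using j xs(2) by simp
    from genD[OF this dpath_restr_edges[OF xs(1)]] show ?thesis by blast
  qed
  ultimately show "j \<in> gen (I - X) (restr_edges E X) h R" by (rule genI)
qed

lemma dpath_through_ram_class:
  assumes "dpath E h xs" and "w \<in> set xs" and "w \<in> ram_class I E h R"
  shows "set xs \<inter> R \<noteq> {}"
proof -
  have w: "ramified E h w" "lower E h w = R" using assms(3) unfolding ram_class_def by simp_all
  then obtain a where "covers E h w a" unfolding ramified_def by blast
  then have "0 < h w" by (simp add: covers_height)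
  then obtain y where "y \<in> set xs" "covers E h w y" using dpath_successor[OF assms(1,2)] by blast
  with w(2) show ?thesis unfolding lower_def by blast
qed

lemma gen_ram_class_subset: "gen I E h (ram_class I E h R) \<subseteq> gen I E h R"
proof
  fix j assume j: "j \<in> gen I E h (ram_class I E h R)"
  show "j \<in> gen I E h R"
  proof (rule genI)
    show "j \<in> I" using j by (rule subsetD[OF gen_subset])
    fix xs assume xs: "dpath E h xs" "hd xs = j"
    then have "hd xs \<in> gen I E h (ram_class I E h R)" using j by simp
    from genD[OF this xs(1)] obtain w where "w \<in> set xs" "w \<in> ram_class I E h R" by blast
    then show "set xs \<inter> R \<noteq> {}" using dpath_through_ram_class[OF xs(1)] by blast
  qed
qed

lemma Ram_lows_subset_gen_diff:
  assumes S: "is_shrub I E h" and R: "R \<in> Ram_lows I E h"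
  shows "R \<subseteq> gen I E h R - gen I E h (ram_class I E h R)"
proof
  fix y assume y: "y \<in> R"
  obtain v a b where "R = lower E h v" using R by (rule Ram_lowsE)
  then have "R \<subseteq> I" using lower_subset[OF S] by simp
  with y have "y \<in> gen I E h R" using gen_self[of y I R] by blast
  moreover have "y \<notin> gen I E h (ram_class I E h R)"
  proof
    assume "y \<in> gen I E h (ram_class I E h R)"
    from gen_below[OF S this] obtain w where w: "w \<in> ram_class I E h R" "(covers E h)\<^sup>*\<^sup>* y w"
      by blast
    show False using below_height(1)[OF w(2)] ram_class_height[OF y w(1)] by simp
  qed
  ultimately show "y \<in> gen I E h R - gen I E h (ram_class I E h R)" by simp
qed

lemma gen_restr_edges_ram_class:
  "gen (I - gen I E h (ram_class I E h R)) (restr_edges E (gen I E h (ram_class I E h R))) h R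
     = gen I E h R - gen I E h (ram_class I E h R)"
  by (rule gen_restr_edges) (rule dpath_through_ram_class)

lemma fP_eq:
  "fP I E h u = 1 / (\<Prod>i\<in>I. usum u (gen I E h {i})) *
     (\<Prod>R\<in>Ram_lows I E h.
        usum u (gen I E h R - gen I E h (ram_class I E h R)) / usum u (gen I E h R))"
  unfolding fP_def Let_def gen_restr_edges_ram_class ..

section \<open>The fraction along one coordinate\<close>

definition spike :: "'a \<Rightarrow> real \<Rightarrow> 'a \<Rightarrow> real" where
  "spike j t = (\<lambda>k. if k = j then t else 1)"

lemma usum_spike:
  assumes "finite S"
  shows "usum (spike j t) S = (if j \<in> S then t + real (card S - 1) else real (card S))"
proof (cases "j \<in> S")
  case True
  have "usum (spike j t) S = spike j t j + (\<Sum>k\<in>S - {j}. spike j t k)"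
    unfolding usum_def using sum.remove[OF assms True] by simp
  also have "(\<Sum>k\<in>S - {j}. spike j t k) = (\<Sum>k\<in>S - {j}. 1)"
    by (rule sum.cong) (auto simp: spike_def)
  finally show ?thesis using True assms by (simp add: spike_def)
next
  case False
  have "usum (spike j t) S = (\<Sum>k\<in>S. 1)" unfolding usum_def
    by (rule sum.cong) (use False in \<open>auto simp: spike_def\<close>)
  then show ?thesis using False by simp
qed

lemma has_degree_usum_spike:
  assumes "finite S" and "S \<noteq> {}"
  shows "has_degree (\<lambda>t. usum (spike j t) S) (of_bool (j \<in> S))"
proof (cases "j \<in> S")
  case True
  then show ?thesis using has_degree_id_plus_const by (simp add: usum_spike[OF assms(1)])
next
  case False
  have "real (card S) > 0" using assms by (simp add: card_gt_0_iff)
  with False show ?thesis using has_degree_const by (simp add: usum_spike[OF assms(1)])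
qed

lemma finite_Ram_lows:
  assumes "is_shrub I E h"
  shows "finite (Ram_lows I E h)"
proof (rule finite_subset)
  show "Ram_lows I E h \<subseteq> Pow I" unfolding Ram_lows_def using lower_subset[OF assms] by blast
  show "finite (Pow I)" using shrub_finite[OF assms] by simp
qed

lemma has_degree_prod_gen_singletons:
  assumes S: "is_shrub I E h"
  shows "has_degree (\<lambda>t. \<Prod>i\<in>I. usum (spike j t) (gen I E h {i})) (card {i \<in> I. j \<in> gen I E h {i}})"
proof -
  have "has_degree (\<lambda>t. \<Prod>i\<in>I. usum (spike j t) (gen I E h {i})) (\<Sum>i\<in>I. of_bool (j \<in> gen I E h {i}))"
  proof (rule has_degree_prod[OF shrub_finite[OF S]])
    fix i assume "i \<in> I"
    then have "gen I E h {i} \<noteq> {}" using gen_self[of i I "{i}"] by auto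
    then show "has_degree (\<lambda>t. usum (spike j t) (gen I E h {i})) (of_bool (j \<in> gen I E h {i}))"
      by (rule has_degree_usum_spike[OF finite_subset[OF gen_subset shrub_finite[OF S]]])
  qed
  then show ?thesis using shrub_finite[OF S] by (simp add: Int_def)
qed

lemma has_degree_prod_Ram_lows:
  assumes S: "is_shrub I E h"
  defines "X R \<equiv> gen I E h (ram_class I E h R)"
  shows "has_degree
      (\<lambda>t. \<Prod>R\<in>Ram_lows I E h. usum (spike j t) (gen I E h R - X R) / usum (spike j t) (gen I E h R))
      (- card {R \<in> Ram_lows I E h. j \<in> X R})"
proof -
  have fin: "finite (gen I E h T)" for T
    using finite_subset[OF gen_subset shrub_finite[OF S]] .
  have "has_degree
      (\<lambda>t. \<Prod>R\<in>Ram_lows I E h. usum (spike j t) (gen I E h R - X R) / usum (spike j t) (gen I E h R))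
      (\<Sum>R\<in>Ram_lows I E h. of_bool (j \<in> gen I E h R - X R) - of_bool (j \<in> gen I E h R))"
  proof (intro has_degree_prod finite_Ram_lows[OF S] has_degree_divide has_degree_usum_spike)
    fix R assume R: "R \<in> Ram_lows I E h"
    obtain v a b where "a \<in> R" using R by (rule Ram_lowsE)
    then show "gen I E h R - X R \<noteq> {}" "gen I E h R \<noteq> {}"
      using Ram_lows_subset_gen_diff[OF S R] unfolding X_def by auto
  qed (use fin in auto)
  moreover have "of_bool (j \<in> gen I E h R - X R) - of_bool (j \<in> gen I E h R) = - (of_bool (j \<in> X R) :: int)"
    for R using gen_ram_class_subset[of I E h R] unfolding X_def by auto
  ultimately show ?thesis using finite_Ram_lows[OF S] by (simp add: sum_negf Int_def)
qed

lemma has_degree_fP_spike: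
  assumes S: "is_shrub I E h" and j: "j \<in> I"
  shows "has_degree (\<lambda>t. fP I E h (spike j t)) (- int (Suc (h j)))"
proof -
  have "has_degree (\<lambda>t. 1 / (\<Prod>i\<in>I. usum (spike j t) (gen I E h {i})))
      (0 - int (card {i \<in> I. j \<in> gen I E h {i}}))"
    using has_degree_divide[OF has_degree_const[of 1] has_degree_prod_gen_singletons[OF S]] by simp
  then have "has_degree (\<lambda>t. fP I E h (spike j t))
      (0 - int (card {i \<in> I. j \<in> gen I E h {i}})
        + - int (card {R \<in> Ram_lows I E h. j \<in> gen I E h (ram_class I E h R)}))"
    unfolding fP_eq by (rule has_degree_mult[OF _ has_degree_prod_Ram_lows[OF S]])
  moreover have "0 - int (card {i \<in> I. j \<in> gen I E h {i}})
        + - int (card {R \<in> Ram_lows I E h. j \<in> gen I E h (ram_class I E h R)}) = - int (Suc (h j))"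
    using card_gen_singletons_ram_classes[OF S j] by linarith
  ultimately show ?thesis by metis
qed

theorem mainTheorem14:
  fixes I :: "'a set" and E E' :: "'a set set" and h h' :: "'a \<Rightarrow> nat"
  assumes "is_shrub I E h" and "is_shrub I E' h'"
    and "\<forall>u :: 'a \<Rightarrow> real. (\<forall>i\<in>I. 0 < u i) \<longrightarrow> fP I E h u = fP I E' h' u"
  shows "\<forall>i\<in>I. h i = h' i"
proof
  fix j assume j: "j \<in> I"
  have "eventually (\<lambda>t. fP I E h (spike j t) = fP I E' h' (spike j t)) at_top"
    using eventually_gt_at_top[of 0] by eventually_elim (use assms(3) in \<open>simp add: spike_def\<close>)
  with has_degree_fP_spike[OF assms(1) j] has_degree_fP_spike[OF assms(2) j]
  have "- int (Suc (h j)) = - int (Suc (h' j))" by (rule has_degree_unique)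
  then show "h j = h' j" by simp
qed

end
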